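(* Let $(\Omega,\mathbb B(\Omega),\mu,T)$ be a measure-preserving dynamical system and let $\mathbf X=(X_1,\dots,X_N)$ be an $\mathbb R^N$-valued random vector on $(\Omega,\mathbb B(\Omega))$ satisfying condition (OR), i.e. $h_\mu(T)=\lim_{d\to\infty}h_\mu(T,\mathcal P^{\mathbf X}(d))$. Then: (i) $h_\mu(T)\le \limsup_{d\to\infty}h^{\mathbf X}_{\mu,\mathrm{cond}}(T,d)\le \limsup_{d\to\infty}h^{\mathbf X}_{\mu,\triangle}(T,d)$. (ii) If moreover either there is $d_0\in\mathbb N$ with $h^{\mathbf X}_\mu(T,d)\ge h^{\mathbf X}_\mu(T,d+1)$ for all $d\ge d_0$, or the limit $\lim_{d\to\infty}h^{\mathbf X}_{\mu,\triangle}(T,d)$ exists, then $$h_\mu(T)\le \limsup_{d\to\infty}h^{\mathbf X}_{\mu,\mathrm{cond}}(T,d)\le \limsup_{d\to\infty}h^{\mathbf X}_{\mu,\triangle}(T,d)\le \limsup_{d\to\infty}h^{\mathbf X}_{\mu}(T,d).$$ Both statements remain true with all upper limits replaced by lower limits.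
   Context: A measure-preserving dynamical system $(\Omega,\mathbb B(\Omega),\mu,T)$ consists of a nonempty topological space $\Omega$ with Borel $\sigma$-algebra $\mathbb B(\Omega)$, a probability measure $\mu$, and a measurable map $T:\Omega\to\Omega$ with $\mu(T^{-1}B)=\mu(B)$ for all $B\in\mathbb B(\Omega)$. For a finite partition $\mathcal P=\{P_0,\dots,P_l\}\subset\mathbb B(\Omega)$ of $\Omega$: $H(\mathcal P)=-\sum_{P\in\mathcal P}\mu(P)\ln\mu(P)$ (with $0\ln0=0$); $\mathcal P_n$ is the partition consisting of the sets $P_{a_0}\cap T^{-1}(P_{a_1})\cap\dots\cap T^{-(n-1)}(P_{a_{n-1}})$, $a_i\in\{0,\dots,l\}$; $h_\mu(T,\mathcal P)=\lim_{n\to\infty}(H(\mathcal P_{n+1})-H(\mathcal P_n))$; the Kolmogorov–Sinai entropy is $h_\mu(T)=\sup_{\mathcal P}h_\mu(T,\mathcal P)$ over finite partitions. Let $\Pi_d$ be the set of permutations of $\{0,1,\dots,d\}$. A vector $(x_0,\dots,x_d)\in\mathbb R^{d+1}$ has ordinal pattern $\pi=(r_0,\dots,r_d)\in\Pi_d$ if $x_{r_0}\ge x_{r_1}\ge\dots\ge x_{r_d}$ and $r_{l-1}>r_l$ whenever $x_{r_{l-1}}=x_{r_l}$. For a random vector $\mathbf X=(X_1,\dots,X_N)$ and $d\in\mathbb N$, the ordinal partition $\mathcal P^{\mathbf X}(d)$ consists of the sets $P_{(\pi_1,\dots,\pi_N)}=\{\omega: (X_i(T^{d}\omega),X_i(T^{d-1}\omega),\dots,X_i(T\omega),X_i(\omega))\text{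 has ordinal pattern }\pi_i\text{ for } i=1,\dots,N\}$, $\pi_i\in\Pi_d$. Permutation entropy: $h^{\mathbf X}_\mu(T,d)=\frac1d H(\mathcal P^{\mathbf X}(d))$. Sorting entropy: $h^{\mathbf X}_{\mu,\triangle}(T,d)=H(\mathcal P^{\mathbf X}(d+1))-H(\mathcal P^{\mathbf X}(d))$. Conditional entropy of ordinal patterns: $h^{\mathbf X}_{\mu,\mathrm{cond}}(T,d)=H(\mathcal P^{\mathbf X}(d)_2)-H(\mathcal P^{\mathbf X}(d))$. *)

theory Defs
  imports "HOL-Probability.Probability"
begin

definition mpds :: "('a::topological_space) measure \<Rightarrow> ('a \<Rightarrow> 'a) \<Rightarrow> bool" where
  "mpds M T \<longleftrightarrow> prob_space M \<and> sets M = sets (borel :: 'a measure) \<and>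
     T \<in> measurable M M \<and> (\<forall>B \<in> sets M. measure M (T -` B \<inter> space M) = measure M B)"

definition fin_partition :: "'a measure \<Rightarrow> 'a set set \<Rightarrow> bool" where
  "fin_partition M P \<longleftrightarrow> finite P \<and> P \<subseteq> sets M \<and> \<Union>P = space M \<and>
     (\<forall>A\<in>P. \<forall>B\<in>P. A \<noteq> B \<longrightarrow> A \<inter> B = {})"

text \<open>Shannon entropy of a partition, H(P) = - sum mu(P) ln mu(P); note ln 0 = 0 in Isabelle.\<close>
definition part_entropy :: "'a measure \<Rightarrow> 'a set set \<Rightarrow> real" where
  "part_entropy M P = - (\<Sum>A\<in>P. measure M A * ln (measure M A))"

definition refine :: "'a measure \<Rightarrow> ('a \<Rightarrow> 'a) \<Rightarrow> 'a set set \<Rightarrow> nat \<Rightarrow> 'a set set" where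
  "refine M T P n = (\<lambda>a. {\<omega> \<in> space M. \<forall>k<n. (T ^^ k) \<omega> \<in> a k}) ` (\<Pi>\<^sub>E k\<in>{..<n}. P)"

definition ent_rel :: "'a measure \<Rightarrow> ('a \<Rightarrow> 'a) \<Rightarrow> 'a set set \<Rightarrow> real" where
  "ent_rel M T P = lim (\<lambda>n. part_entropy M (refine M T P (Suc n)) - part_entropy M (refine M T P n))"

definition ks_entropy :: "'a measure \<Rightarrow> ('a \<Rightarrow> 'a) \<Rightarrow> ereal" where
  "ks_entropy M T = (SUP P \<in> {P. fin_partition M P}. ereal (ent_rel M T P))"

definition perms :: "nat \<Rightarrow> nat list set" where
  "perms d = {r. length r = Suc d \<and> set r = {0..d}}"

definition has_pattern :: "(nat \<Rightarrow> real) \<Rightarrow> nat \<Rightarrow> nat list \<Rightarrow> bool" where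
  "has_pattern x d r \<longleftrightarrow> r \<in> perms d \<and>
     (\<forall>l\<in>{1..d}. x (r ! (l - 1)) \<ge> x (r ! l) \<and>
        (x (r ! (l - 1)) = x (r ! l) \<longrightarrow> r ! (l - 1) > r ! l))"

definition ord_part :: "'a measure \<Rightarrow> ('a \<Rightarrow> 'a) \<Rightarrow> (nat \<Rightarrow> 'a \<Rightarrow> real) \<Rightarrow> nat \<Rightarrow> nat \<Rightarrow> 'a set set" where
  "ord_part M T X N d =
     (\<lambda>ps. {\<omega> \<in> space M. \<forall>i<N. has_pattern (\<lambda>j. X i ((T ^^ (d - j)) \<omega>)) d (ps i)})
       ` (\<Pi>\<^sub>E i\<in>{..<N}. perms d)"

definition perm_entropy :: "'a measure \<Rightarrow> ('a \<Rightarrow> 'a) \<Rightarrow> (nat \<Rightarrow> 'a \<Rightarrow> real) \<Rightarrow> nat \<Rightarrow> nat \<Rightarrow> real" where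
  "perm_entropy M T X N d = part_entropy M (ord_part M T X N d) / real d"

definition sort_entropy :: "'a measure \<Rightarrow> ('a \<Rightarrow> 'a) \<Rightarrow> (nat \<Rightarrow> 'a \<Rightarrow> real) \<Rightarrow> nat \<Rightarrow> nat \<Rightarrow> real" where
  "sort_entropy M T X N d = part_entropy M (ord_part M T X N (Suc d)) - part_entropy M (ord_part M T X N d)"

definition cond_entropy :: "'a measure \<Rightarrow> ('a \<Rightarrow> 'a) \<Rightarrow> (nat \<Rightarrow> 'a \<Rightarrow> real) \<Rightarrow> nat \<Rightarrow> nat \<Rightarrow> real" where
  "cond_entropy M T X N d = part_entropy M (refine M T (ord_part M T X N d) 2) - part_entropy M (ord_part M T X N d)"

end

theory Submission
  imports Defs
begin

text \<open>
  For any finite partition \<open>P\<close> the increments \<open>H(P\<^sub>n\<^sub>+\<^sub>1) - H(P\<^sub>n)\<close> decrease in \<open>n\<close>: by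
  \<open>T\<close>-invariance they are conditional entropies of the current cell given ever longer
  future itineraries, and conditioning on more information lowers entropy (strong
  subadditivity). Hence \<open>h(T, P) \<le> H(P\<^sub>2) - H(P)\<close>; for \<open>P = P\<^sup>X(d)\<close> the right-hand side is the
  conditional entropy of ordinal patterns and, under (OR), the left-hand side tends to
  \<open>h\<^sub>\<mu>(T)\<close>. The ordinal pattern of order \<open>d + 1\<close> at \<open>\<omega>\<close> determines the patterns of
  order \<open>d\<close> at \<open>\<omega>\<close> and at \<open>T \<omega>\<close>, so \<open>P\<^sup>X(d + 1)\<close> refines \<open>P\<^sup>X(d)\<^sub>2\<close>, which gives the
  comparison with sorting entropy. Sorting entropies are the increments and permutation
  entropies the averages of \<open>d \<mapsto> H(P\<^sup>X(d))\<close>, and the last inequality is an elementary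
  Stolz-Cesaro argument.
\<close>

section \<open>Ordinal patterns\<close>

definition ord_prec :: "(nat \<Rightarrow> real) \<Rightarrow> nat \<Rightarrow> nat \<Rightarrow> bool" where
  "ord_prec x i j \<longleftrightarrow> x j < x i \<or> (x i = x j \<and> j < i)"

lemma transp_ord_prec: "transp (ord_prec x)"
  unfolding ord_prec_def transp_def by auto

lemma ord_prec_asym: "ord_prec x i j \<Longrightarrow> \<not> ord_prec x j i"
  unfolding ord_prec_def by auto

lemma ord_prec_total: "i \<noteq> j \<Longrightarrow> ord_prec x i j \<or> ord_prec x j i"
  unfolding ord_prec_def by auto

lemma sorted_wrt_set_unique:
  assumes asym: "\<And>a b. R a b \<Longrightarrow> \<not> R b a"
  shows "sorted_wrt R xs \<Longrightarrow> sorted_wrt R ys \<Longrightarrow> set xs = set ys \<Longrightarrow> xs = ys"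
proof (induction xs arbitrary: ys)
  case Nil
  then show ?case by simp
next
  case (Cons x xs)
  then obtain y ys' where ys: "ys = y # ys'"
    by (cases ys) auto
  have "x = y"
  proof (rule ccontr)
    assume "x \<noteq> y"
    then have "R x y" "R y x"
      using Cons.prems ys by (auto simp: insert_eq_iff)
    then show False using asym by blast
  qed
  moreover have "x \<notin> set xs" "x \<notin> set ys'"
    using Cons.prems ys \<open>x = y\<close> asym[of x x] by auto
  ultimately have "set xs = set ys'"
    using Cons.prems(3) ys by (metis insert_eq_iff list.simps(15))
  then show ?case
    using Cons ys \<open>x = y\<close> by simp
qed

lemma sorted_wrt_nth_iff_less:
  assumes asym: "\<And>a b. R a b \<Longrightarrow> \<not> R b a"
    and "sorted_wrt R xs" "i < length xs" "j < length xs"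
  shows "R (xs ! i) (xs ! j) \<longleftrightarrow> i < j"
proof -
  consider "i < j" | "i = j" | "j < i" by arith
  then show ?thesis
    by cases (use sorted_wrt_nth_less[OF assms(2)] assms(3,4) asym in blast)+
qed

lemma has_pattern_iff_ord_prec:
  "has_pattern x d r \<longleftrightarrow> r \<in> perms d \<and> (\<forall>l\<in>{1..d}. ord_prec x (r ! (l - 1)) (r ! l))"
  unfolding has_pattern_def ord_prec_def by (auto simp: le_less)

lemma has_pattern_iff_sorted_wrt:
  "has_pattern x d r \<longleftrightarrow> r \<in> perms d \<and> sorted_wrt (ord_prec x) r"
proof -
  have shift: "(\<forall>l\<in>{1..d}. P (l - 1) l) \<longleftrightarrow> (\<forall>i<d. P i (Suc i))" for P :: "nat \<Rightarrow> nat \<Rightarrow> bool"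
  proof safe
    fix i assume all: "\<forall>l\<in>{1..d}. P (l - 1) l" and "i < d"
    then show "P i (Suc i)" using all[rule_format, of "Suc i"] by simp
  next
    fix l assume "\<forall>i<d. P i (Suc i)" "l \<in> {1..d}"
    then show "P (l - 1) l" by (cases l) auto
  qed
  have "has_pattern x d r \<longleftrightarrow> r \<in> perms d \<and> (\<forall>i<d. ord_prec x (r ! i) (r ! Suc i))"
    unfolding has_pattern_iff_ord_prec using shift[of "\<lambda>i j. ord_prec x (r ! i) (r ! j)"] by simp
  also have "\<dots> \<longleftrightarrow> r \<in> perms d \<and> sorted_wrt (ord_prec x) r"
    unfolding sorted_wrt_iff_nth_Suc_transp[OF transp_ord_prec] perms_def by auto
  finally show ?thesis .
qed

lemma has_pattern_unique:
  assumes "has_pattern x d r" "has_pattern x d r'" shows "r = r'"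
  using assms unfolding has_pattern_iff_sorted_wrt perms_def
  by (intro sorted_wrt_set_unique[of "ord_prec x"]) (auto dest: ord_prec_asym)

lemma has_pattern_exists: "\<exists>r. has_pattern x d r"
proof -
  define rank where "rank i = card {j\<in>{0..d}. ord_prec x j i}" for i
  have rank_less: "rank i < rank j" if "ord_prec x i j" "i \<le> d" for i j
  proof -
    have "{k\<in>{0..d}. ord_prec x k i} \<subset> {k\<in>{0..d}. ord_prec x k j}"
      using that transp_ord_prec[of x] ord_prec_asym[of x] by (auto dest: transpD)
    then show ?thesis unfolding rank_def by (simp add: psubset_card_mono)
  qed
  define r where "r = sort_key rank [0..<Suc d]"
  have "r \<in> perms d" and set_r: "set r = {0..d}" and "distinct r" and "sorted (map rank r)"
    unfolding r_def perms_def by auto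
  moreover have "sorted_wrt (ord_prec x) r"
    unfolding sorted_wrt_iff_nth_less
  proof (intro allI impI)
    fix a b assume ab: "a < b" "b < length r"
    then have "r ! a \<noteq> r ! b" "r ! a \<le> d" "r ! b \<le> d"
      using \<open>distinct r\<close> nth_mem[of _ r] set_r by (auto simp: nth_eq_iff_index_eq)
    moreover have "rank (r ! a) \<le> rank (r ! b)"
      using ab \<open>sorted (map rank r)\<close> by (simp add: sorted_iff_nth_mono)
    ultimately show "ord_prec x (r ! a) (r ! b)"
      using ord_prec_total rank_less by (meson leD)
  qed
  ultimately show ?thesis unfolding has_pattern_iff_sorted_wrt by blast
qed

definition ord_pattern :: "nat \<Rightarrow> (nat \<Rightarrow> real) \<Rightarrow> nat list" where
  "ord_pattern d x = (THE r. has_pattern x d r)"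

lemma has_pattern_ord_pattern: "has_pattern x d (ord_pattern d x)"
  unfolding ord_pattern_def
  by (rule theI') (use has_pattern_exists has_pattern_unique in blast)

lemma ord_pattern_eqI: "has_pattern x d r \<Longrightarrow> ord_pattern d x = r"
  using has_pattern_ord_pattern has_pattern_unique by blast

lemma ord_pattern_eq_has_pattern: "ord_pattern d x = r \<longleftrightarrow> has_pattern x d r"
  using has_pattern_ord_pattern ord_pattern_eqI by blast

lemma ord_pattern_in_perms: "ord_pattern d x \<in> perms d"
  using has_pattern_ord_pattern has_pattern_iff_sorted_wrt by blast

lemma ord_pattern_eq_iff:
  "ord_pattern d x = ord_pattern d y \<longleftrightarrow> (\<forall>a\<le>d. \<forall>b\<le>d. ord_prec x a b = ord_prec y a b)"
proof
  assume eq: "ord_pattern d x = ord_pattern d y"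
  let ?r = "ord_pattern d x"
  have sorted: "sorted_wrt (ord_prec x) ?r" "sorted_wrt (ord_prec y) ?r" and "set ?r = {0..d}"
    using has_pattern_ord_pattern[of x d] has_pattern_ord_pattern[of y d] eq
    unfolding has_pattern_iff_sorted_wrt perms_def by auto
  show "\<forall>a\<le>d. \<forall>b\<le>d. ord_prec x a b = ord_prec y a b"
  proof (intro allI impI)
    fix a b assume "a \<le> d" "b \<le> d"
    then obtain i j where "i < length ?r" "j < length ?r" "a = ?r ! i" "b = ?r ! j"
      using \<open>set ?r = {0..d}\<close> by (metis atLeastAtMost_iff in_set_conv_nth zero_le)
    then show "ord_prec x a b = ord_prec y a b"
      using sorted_wrt_nth_iff_less[of "ord_prec x", OF ord_prec_asym sorted(1)]
        sorted_wrt_nth_iff_less[of "ord_prec y", OF ord_prec_asym sorted(2)] by simp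
  qed
next
  assume agree: "\<forall>a\<le>d. \<forall>b\<le>d. ord_prec x a b = ord_prec y a b"
  let ?r = "ord_pattern d x"
  have "?r \<in> perms d" "sorted_wrt (ord_prec x) ?r"
    using has_pattern_ord_pattern unfolding has_pattern_iff_sorted_wrt by blast+
  moreover from this(1) have "set ?r = {0..d}" unfolding perms_def by simp
  ultimately have "sorted_wrt (ord_prec y) ?r"
    using agree nth_mem[of _ ?r] by (fastforce simp: sorted_wrt_iff_nth_less)
  then show "ord_pattern d x = ord_pattern d y"
    using \<open>?r \<in> perms d\<close> by (metis ord_pattern_eqI has_pattern_iff_sorted_wrt)
qed

lemma ord_pattern_Suc_eqD:
  assumes "ord_pattern (Suc d) x = ord_pattern (Suc d) y"
  shows "ord_pattern d x = ord_pattern d y"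
    and "ord_pattern d (\<lambda>j. x (Suc j)) = ord_pattern d (\<lambda>j. y (Suc j))"
  using assms unfolding ord_pattern_eq_iff ord_prec_def by auto

lemma ord_pattern_cong: "(\<And>j. j \<le> d \<Longrightarrow> x j = y j) \<Longrightarrow> ord_pattern d x = ord_pattern d y"
  unfolding ord_pattern_eq_iff ord_prec_def by simp

lemma finite_perms: "finite (perms d)"
proof -
  have "perms d \<subseteq> {xs. set xs \<subseteq> {0..d} \<and> length xs = Suc d}" unfolding perms_def by auto
  then show ?thesis using finite_subset finite_lists_length_eq[of "{0..d}" "Suc d"] by auto
qed

section \<open>Entropy of simple functions and itineraries\<close>

lemma determined_imp_factor:
  assumes "\<And>\<omega> \<omega>'. \<omega> \<in> S \<Longrightarrow> \<omega>' \<in> S \<Longrightarrow> F \<omega> = F \<omega>' \<Longrightarrow> G \<omega> = G \<omega>'"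
  shows "\<exists>h. \<forall>\<omega>\<in>S. G \<omega> = h (F \<omega>)"
proof (intro exI ballI)
  fix \<omega> assume "\<omega> \<in> S"
  then have "\<exists>\<omega>'. \<omega>' \<in> S \<and> F \<omega>' = F \<omega>" by blast
  then show "G \<omega> = G (SOME \<omega>'. \<omega>' \<in> S \<and> F \<omega>' = F \<omega>)"
    using assms[OF \<open>\<omega> \<in> S\<close>] by (metis (mono_tags, lifting) someI_ex)
qed

lemma (in prob_space) sum_prob_vimage_factor:
  assumes F: "simple_function M F" and G: "\<And>\<omega>. \<omega> \<in> space M \<Longrightarrow> G \<omega> = h (F \<omega>)"
  shows "(\<Sum>w\<in>F`space M. prob (F -` {w} \<inter> space M) * \<phi> (h w))
       = (\<Sum>v\<in>G`space M. prob (G -` {v} \<inter> space M) * \<phi> v)"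
proof -
  have fin: "finite (F`space M)" using F simple_functionD by auto
  have img: "G`space M = h`(F`space M)" using G by (auto simp: image_image)
  have prob_G: "prob (G -` {v} \<inter> space M) = (\<Sum>w\<in>{w\<in>F`space M. h w = v}. prob (F -` {w} \<inter> space M))" for v
  proof -
    have "G -` {v} \<inter> space M = (\<Union>w\<in>{w\<in>F`space M. h w = v}. F -` {w} \<inter> space M)"
      using G by auto
    moreover have "prob (\<Union>w\<in>{w\<in>F`space M. h w = v}. F -` {w} \<inter> space M)
        = (\<Sum>w\<in>{w\<in>F`space M. h w = v}. prob (F -` {w} \<inter> space M))"
      by (rule measure_finite_Union)
         (use fin F simple_functionD(2) in \<open>auto simp: disjoint_family_on_def\<close>)
    ultimately show ?thesis by simp
  qed
  have "(\<Sum>v\<in>G`space M. prob (G -` {v} \<inter> space M) * \<phi> v)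
      = (\<Sum>v\<in>G`space M. \<Sum>w\<in>{w\<in>F`space M. h w = v}. prob (F -` {w} \<inter> space M) * \<phi> (h w))"
    unfolding prob_G sum_distrib_right by (intro sum.cong refl) auto
  also have "\<dots> = (\<Sum>w\<in>F`space M. prob (F -` {w} \<inter> space M) * \<phi> (h w))"
    by (rule sum.group) (use fin img in auto)
  finally show ?thesis by simp
qed

context information_space
begin

lemma entropy_cong:
  assumes "\<And>\<omega>. \<omega> \<in> space M \<Longrightarrow> X \<omega> = Y \<omega>"
  shows "\<H>(X) = \<H>(Y)"
proof -
  have "X ` space M = Y ` space M" using assms by (auto simp: image_def)
  moreover have "distr M (count_space (Y ` space M)) X = distr M (count_space (Y ` space M)) Y"
    by (rule distr_cong) (simp_all add: assms)
  ultimately show ?thesis unfolding entropy_def by simp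
qed

lemma entropy_simple_function:
  "simple_function M X \<Longrightarrow>
    \<H>(X) = - (\<Sum>x\<in>X`space M. prob (X -` {x} \<inter> space M) * log b (prob (X -` {x} \<inter> space M)))"
  by (rule entropy_simple_distributed[OF simple_distributedI[OF _ measure_nonneg refl]])

lemma
  assumes F: "simple_function M F"
    and det: "\<And>\<omega> \<omega>'. \<omega> \<in> space M \<Longrightarrow> \<omega>' \<in> space M \<Longrightarrow> F \<omega> = F \<omega>' \<Longrightarrow> G \<omega> = G \<omega>'"
  shows simple_function_determined: "simple_function M G"
    and entropy_le_determined: "\<H>(G) \<le> \<H>(F)"
proof -
  obtain h where h: "\<And>\<omega>. \<omega> \<in> space M \<Longrightarrow> G \<omega> = h (F \<omega>)"
    using determined_imp_factor[of "space M" F G, OF det] by blast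
  have "simple_function M (h \<circ> F)" using F by simp
  then show "simple_function M G"
    using simple_function_cong[of M G "h \<circ> F"] h by simp
  have "\<H>(G) = \<H>(h \<circ> F)" by (rule entropy_cong) (simp add: h)
  also have "\<dots> \<le> \<H>(F)" by (rule entropy_data_processing[OF F])
  finally show "\<H>(G) \<le> \<H>(F)" .
qed

lemma entropy_eq_determined:
  assumes F: "simple_function M F"
    and "\<And>\<omega> \<omega>'. \<omega> \<in> space M \<Longrightarrow> \<omega>' \<in> space M \<Longrightarrow> F \<omega> = F \<omega>' \<longleftrightarrow> G \<omega> = G \<omega>'"
  shows "\<H>(G) = \<H>(F)"
  using entropy_le_determined[OF F] entropy_le_determined[OF simple_function_determined[OF F]] assms(2)
  by (metis order_antisym)

lemma entropy_strong_subadditivity: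
  assumes X: "simple_function M X" and Y: "simple_function M Y" and Z: "simple_function M Z"
  shows "\<H>(\<lambda>\<omega>. (X \<omega>, Y \<omega>, Z \<omega>)) + \<H>(Z) \<le> \<H>(\<lambda>\<omega>. (X \<omega>, Z \<omega>)) + \<H>(\<lambda>\<omega>. (Y \<omega>, Z \<omega>))"
proof -
  define pz where "pz v = prob (Z -` {v} \<inter> space M)" for v
  define pyz where "pyz v = prob ((\<lambda>\<omega>. (Y \<omega>, Z \<omega>)) -` {v} \<inter> space M)" for v
  define pxz where "pxz v = prob ((\<lambda>\<omega>. (X \<omega>, Z \<omega>)) -` {v} \<inter> space M)" for v
  define pxyz where "pxyz v = prob ((\<lambda>\<omega>. (X \<omega>, Y \<omega>, Z \<omega>)) -` {v} \<inter> space M)" for v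
  let ?S = "(\<lambda>\<omega>. (X \<omega>, Y \<omega>, Z \<omega>)) ` space M"
  have YZ: "simple_function M (\<lambda>\<omega>. (Y \<omega>, Z \<omega>))" and XZ: "simple_function M (\<lambda>\<omega>. (X \<omega>, Z \<omega>))"
    and XYZ: "simple_function M (\<lambda>\<omega>. (X \<omega>, Y \<omega>, Z \<omega>))"
    using X Y Z by auto
  have le_marginals: "pxyz (x, y, z) \<le> pxz (x, z)" "pxyz (x, y, z) \<le> pyz (y, z)" "pxyz (x, y, z) \<le> pz z"
    for x y z unfolding pxyz_def pxz_def pyz_def pz_def
    by (intro finite_measure_mono; use XZ YZ Z simple_functionD(2) in force)+
  have log_split: "pxyz w * log b (pxyz w / (pxz (fst w, snd (snd w)) * (pyz (snd w) / pz (snd (snd w)))))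
      = pxyz w * log b (pxyz w) - pxyz w * log b (pxz (fst w, snd (snd w)))
        - pxyz w * log b (pyz (snd w)) + pxyz w * log b (pz (snd (snd w)))" for w
  proof (cases "pxyz w = 0")
    case False
    obtain x y z where w: "w = (x, y, z)" by (cases w) auto
    have "0 < pxyz w" using False unfolding pxyz_def using measure_nonneg[of M] by (simp add: less_le)
    moreover from this have "0 < pxz (x, z)" "0 < pyz (y, z)" "0 < pz z"
      using le_marginals[of x y z] unfolding w by linarith+
    ultimately show ?thesis
      unfolding w using b_gt_1 by (simp add: log_divide log_mult algebra_simps)
  qed simp
  have "0 \<le> \<I>(X ; Y | Z)"
    by (rule conditional_mutual_information_nonneg[OF X Y Z])
  also have "\<I>(X ; Y | Z) = (\<Sum>(x, y, z)\<in>?S. pxyz (x, y, z) * log b (pxyz (x, y, z) / (pxz (x, z) * (pyz (y,z) / pz z))))"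
    by (rule conditional_mutual_information_eq)
       (auto intro!: simple_distributedI YZ XZ XYZ Z simp: pz_def pyz_def pxz_def pxyz_def)
  also have "\<dots> = (\<Sum>w\<in>?S. pxyz w * log b (pxyz w)) - (\<Sum>w\<in>?S. pxyz w * log b (pxz (fst w, snd (snd w))))
      - (\<Sum>w\<in>?S. pxyz w * log b (pyz (snd w))) + (\<Sum>w\<in>?S. pxyz w * log b (pz (snd (snd w))))"
    by (simp only: split_beta' prod.collapse log_split sum.distrib sum_subtractf)
  also have "(\<Sum>w\<in>?S. pxyz w * log b (pxz (fst w, snd (snd w))))
      = (\<Sum>v\<in>(\<lambda>\<omega>. (X \<omega>, Z \<omega>))`space M. pxz v * log b (pxz v))"
    unfolding pxyz_def pxz_def by (rule sum_prob_vimage_factor[OF XYZ]) auto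
  also have "(\<Sum>w\<in>?S. pxyz w * log b (pyz (snd w)))
      = (\<Sum>v\<in>(\<lambda>\<omega>. (Y \<omega>, Z \<omega>))`space M. pyz v * log b (pyz v))"
    unfolding pxyz_def pyz_def by (rule sum_prob_vimage_factor[OF XYZ]) auto
  also have "(\<Sum>w\<in>?S. pxyz w * log b (pz (snd (snd w))))
      = (\<Sum>v\<in>Z`space M. pz v * log b (pz v))"
    unfolding pxyz_def pz_def by (rule sum_prob_vimage_factor[OF XYZ]) auto
  finally show ?thesis
    unfolding entropy_simple_function[OF XYZ] entropy_simple_function[OF XZ]
      entropy_simple_function[OF YZ] entropy_simple_function[OF Z]
      pxyz_def pxz_def pyz_def pz_def
    by simp
qed

lemma entropy_pair_diff_le:
  assumes X: "simple_function M X" and Y: "simple_function M Y"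
    and det: "\<And>\<omega> \<omega>'. \<omega> \<in> space M \<Longrightarrow> \<omega>' \<in> space M \<Longrightarrow> Y \<omega> = Y \<omega>' \<Longrightarrow> Z \<omega> = Z \<omega>'"
  shows "\<H>(\<lambda>\<omega>. (X \<omega>, Y \<omega>)) - \<H>(Y) \<le> \<H>(\<lambda>\<omega>. (X \<omega>, Z \<omega>)) - \<H>(Z)"
proof -
  have Z: "simple_function M Z" by (rule simple_function_determined[OF Y det])
  have "\<H>(\<lambda>\<omega>. (X \<omega>, Y \<omega>, Z \<omega>)) = \<H>(\<lambda>\<omega>. (X \<omega>, Y \<omega>))"
    by (rule entropy_eq_determined) (use X Y det in blast)+
  moreover have "\<H>(\<lambda>\<omega>. (Y \<omega>, Z \<omega>)) = \<H>(Y)"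
    by (rule entropy_eq_determined[OF Y]) (use det in blast)
  ultimately show ?thesis
    using entropy_strong_subadditivity[OF X Y Z] by simp
qed

end

lemma simple_function_comp_measurable:
  assumes F: "simple_function M F" and T: "T \<in> measurable N M"
  shows "simple_function N (\<lambda>\<omega>. F (T \<omega>))"
  unfolding simple_function_def
proof (intro conjI ballI)
  have "(\<lambda>\<omega>. F (T \<omega>)) ` space N \<subseteq> F ` space M"
    using measurable_space[OF T] by auto
  then show "finite ((\<lambda>\<omega>. F (T \<omega>)) ` space N)"
    using F simple_functionD(1) finite_subset by blast
  fix v
  have "(\<lambda>\<omega>. F (T \<omega>)) -` {v} \<inter> space N = T -` (F -` {v} \<inter> space M) \<inter> space N"
    using measurable_space[OF T] by auto
  then show "(\<lambda>\<omega>. F (T \<omega>)) -` {v} \<inter> space N \<in> sets N"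
    using measurable_sets[OF T simple_functionD(2)[OF F]] by simp
qed

definition itinerary :: "('a \<Rightarrow> 'a) \<Rightarrow> ('a \<Rightarrow> 'b) \<Rightarrow> nat \<Rightarrow> 'a \<Rightarrow> nat \<Rightarrow> 'b" where
  "itinerary T c n \<omega> = (\<lambda>k\<in>{..<n}. c ((T ^^ k) \<omega>))"

lemma itinerary_Suc: "itinerary T c (Suc n) \<omega> = (itinerary T c n \<omega>)(n := c ((T ^^ n) \<omega>))"
  by (auto simp: itinerary_def fun_eq_iff)

lemma itinerary_eq_iff:
  "itinerary T c n \<omega> = itinerary T c n \<omega>' \<longleftrightarrow> (\<forall>k<n. c ((T ^^ k) \<omega>) = c ((T ^^ k) \<omega>'))"
  unfolding itinerary_def restrict_def fun_eq_iff by auto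

lemma itinerary_Suc_eq_iff:
  "itinerary T c (Suc n) \<omega> = itinerary T c (Suc n) \<omega>' \<longleftrightarrow>
    c \<omega> = c \<omega>' \<and> itinerary T c n (T \<omega>) = itinerary T c n (T \<omega>')"
  unfolding itinerary_eq_iff All_less_Suc2 by (simp add: funpow_Suc_right funpow_swap1)

locale mp_system = information_space +
  fixes T :: "'a \<Rightarrow> 'a"
  assumes T_measurable: "T \<in> measurable M M"
    and T_preserving: "\<And>A. A \<in> sets M \<Longrightarrow> prob (T -` A \<inter> space M) = prob A"
begin

lemma entropy_comp_T:
  assumes F: "simple_function M F"
  shows "\<H>(\<lambda>\<omega>. F (T \<omega>)) = \<H>(F)"
proof -
  have T_space: "\<And>\<omega>. \<omega> \<in> space M \<Longrightarrow> T \<omega> \<in> space M" by (rule measurable_space[OF T_measurable])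
  have prob_eq: "prob ((\<lambda>\<omega>. F (T \<omega>)) -` {v} \<inter> space M) = prob (F -` {v} \<inter> space M)" for v
  proof -
    have "(\<lambda>\<omega>. F (T \<omega>)) -` {v} \<inter> space M = T -` (F -` {v} \<inter> space M) \<inter> space M"
      using T_space by auto
    then show ?thesis using T_preserving F simple_functionD(2) by metis
  qed
  have FT: "simple_function M (\<lambda>\<omega>. F (T \<omega>))"
    by (rule simple_function_comp_measurable[OF F T_measurable])
  have img: "(\<lambda>\<omega>. F (T \<omega>)) ` space M \<subseteq> F ` space M" using T_space by auto
  have fin: "finite (F ` space M)" using F simple_functionD by auto
  have "(\<Sum>v\<in>(\<lambda>\<omega>. F (T \<omega>)) ` space M. prob (F -` {v} \<inter> space M) * log b (prob (F -` {v} \<inter> space M)))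
     = (\<Sum>v\<in>F ` space M. prob (F -` {v} \<inter> space M) * log b (prob (F -` {v} \<inter> space M)))"
  proof (rule sum.mono_neutral_left[OF fin img], intro ballI)
    fix v assume "v \<in> F ` space M - (\<lambda>\<omega>. F (T \<omega>)) ` space M"
    then have "(\<lambda>\<omega>. F (T \<omega>)) -` {v} \<inter> space M = {}" by blast
    then have "prob (F -` {v} \<inter> space M) = 0" using prob_eq[of v] by simp
    then show "prob (F -` {v} \<inter> space M) * log b (prob (F -` {v} \<inter> space M)) = 0" by simp
  qed
  then show ?thesis
    unfolding entropy_simple_function[OF F] entropy_simple_function[OF FT] prob_eq by simp
qed

lemma simple_function_itinerary:
  assumes c: "simple_function M c"
  shows "simple_function M (itinerary T c n)"
proof (induction n)
  case 0
  then show ?case by (simp add: itinerary_def)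
next
  case (Suc n)
  have "simple_function M (\<lambda>\<omega>. c ((T ^^ n) \<omega>))"
    by (rule simple_function_comp_measurable[OF c measurable_compose_n[OF T_measurable]])
  then show ?case
    unfolding itinerary_Suc by (rule simple_function_compose2[OF Suc.IH, of _ "\<lambda>f a. f(n := a)"])
qed

lemma entropy_itinerary_mono:
  assumes c: "simple_function M c"
  shows "\<H>(itinerary T c n) \<le> \<H>(itinerary T c (Suc n))"
  by (rule entropy_le_determined[OF simple_function_itinerary[OF c]]) (simp add: itinerary_eq_iff)

lemma entropy_itinerary_1:
  assumes c: "simple_function M c"
  shows "\<H>(itinerary T c 1) = \<H>(c)"
  by (rule entropy_eq_determined[OF c]) (simp add: itinerary_eq_iff)

lemma entropy_itinerary_Suc:
  assumes c: "simple_function M c"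
  shows "\<H>(itinerary T c (Suc n)) = \<H>(\<lambda>\<omega>. (c \<omega>, itinerary T c n (T \<omega>)))"
proof (rule entropy_eq_determined)
  show "simple_function M (\<lambda>\<omega>. (c \<omega>, itinerary T c n (T \<omega>)))"
    using c simple_function_comp_measurable[OF simple_function_itinerary[OF c] T_measurable] by simp
qed (simp add: itinerary_Suc_eq_iff)

lemma entropy_itinerary_increment_decreasing:
  assumes c: "simple_function M c"
  shows "\<H>(itinerary T c (Suc (Suc n))) - \<H>(itinerary T c (Suc n))
    \<le> \<H>(itinerary T c (Suc n)) - \<H>(itinerary T c n)"
proof -
  let ?Y = "\<lambda>\<omega>. itinerary T c (Suc n) (T \<omega>)" and ?Z = "\<lambda>\<omega>. itinerary T c n (T \<omega>)"
  have shift: "\<H>(\<lambda>\<omega>. itinerary T c m (T \<omega>)) = \<H>(itinerary T c m)" for m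
    by (rule entropy_comp_T[OF simple_function_itinerary[OF c]])
  have "\<H>(\<lambda>\<omega>. (c \<omega>, ?Y \<omega>)) - \<H>(?Y) \<le> \<H>(\<lambda>\<omega>. (c \<omega>, ?Z \<omega>)) - \<H>(?Z)"
  proof (rule entropy_pair_diff_le[OF c])
    show "simple_function M ?Y"
      by (rule simple_function_comp_measurable[OF simple_function_itinerary[OF c] T_measurable])
  qed (simp add: itinerary_eq_iff)
  then show ?thesis
    unfolding entropy_itinerary_Suc[OF c] shift .
qed

lemma lim_entropy_itinerary_increment_le:
  assumes c: "simple_function M c"
  shows "lim (\<lambda>n. \<H>(itinerary T c (Suc n)) - \<H>(itinerary T c n))
    \<le> \<H>(itinerary T c (Suc m)) - \<H>(itinerary T c m)"
proof -
  let ?a = "\<lambda>n. \<H>(itinerary T c (Suc n)) - \<H>(itinerary T c n)"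
  have "decseq ?a"
    using entropy_itinerary_increment_decreasing[OF c] by (intro decseq_SucI) simp
  moreover have "\<forall>n. 0 \<le> ?a n"
    using entropy_itinerary_mono[OF c] by simp
  ultimately obtain L where L: "?a \<longlonglongrightarrow> L" "\<forall>n. L \<le> ?a n"
    by (rule decseq_convergent)
  have "lim ?a = L" using L(1) by (rule limI)
  moreover have "L \<le> ?a m" using L(2) ..
  ultimately show ?thesis by (simp only:)
qed

end

section \<open>Finite partitions\<close>

definition partition_cell :: "'a set set \<Rightarrow> 'a \<Rightarrow> 'a set" where
  "partition_cell P \<omega> = (THE A. A \<in> P \<and> \<omega> \<in> A)"

lemma partition_cell_eq:
  assumes P: "fin_partition M P" and "A \<in> P" "\<omega> \<in> A"
  shows "partition_cell P \<omega> = A"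
  unfolding partition_cell_def
proof (rule the_equality)
  fix B assume "B \<in> P \<and> \<omega> \<in> B"
  then show "B = A" using P assms(2,3) unfolding fin_partition_def by blast
qed (use assms in simp)

lemma
  assumes P: "fin_partition M P" and "\<omega> \<in> space M"
  shows partition_cell_in: "partition_cell P \<omega> \<in> P"
    and in_partition_cell: "\<omega> \<in> partition_cell P \<omega>"
proof -
  obtain A where "A \<in> P" "\<omega> \<in> A" using assms unfolding fin_partition_def by blast
  then show "partition_cell P \<omega> \<in> P" "\<omega> \<in> partition_cell P \<omega>"
    using partition_cell_eq[OF P] by simp_all
qed

lemma partition_cell_eq_iff:
  assumes P: "fin_partition M P" and "\<omega> \<in> space M" "\<omega>' \<in> space M"
  shows "partition_cell P \<omega> = partition_cell P \<omega>' \<longleftrightarrow> \<omega>' \<in> partition_cell P \<omega>"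
proof
  assume "partition_cell P \<omega> = partition_cell P \<omega>'"
  then show "\<omega>' \<in> partition_cell P \<omega>" using in_partition_cell[OF P assms(3)] by simp
next
  assume "\<omega>' \<in> partition_cell P \<omega>"
  then show "partition_cell P \<omega> = partition_cell P \<omega>'"
    using partition_cell_eq[OF P partition_cell_in[OF P assms(2)]] by simp
qed

lemma partition_cell_vimage:
  assumes P: "fin_partition M P" and "A \<in> P"
  shows "partition_cell P -` {A} \<inter> space M = A"
proof -
  have "A \<subseteq> space M" using P assms(2) unfolding fin_partition_def by blast
  then show ?thesis
    using partition_cell_eq[OF P \<open>A \<in> P\<close>] in_partition_cell[OF P] by blast
qed

lemma simple_function_partition_cell:
  assumes P: "fin_partition M P"
  shows "simple_function M (partition_cell P)"
  unfolding simple_function_def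
proof (intro conjI ballI)
  have img: "partition_cell P ` space M \<subseteq> P" using partition_cell_in[OF P] by blast
  moreover have "finite P" using P by (simp add: fin_partition_def)
  ultimately show "finite (partition_cell P ` space M)" by (rule finite_subset)
  fix A assume "A \<in> partition_cell P ` space M"
  then have "A \<in> P" using img by blast
  moreover have "P \<subseteq> sets M" using P by (simp add: fin_partition_def)
  ultimately show "partition_cell P -` {A} \<inter> space M \<in> sets M"
    using partition_cell_vimage[OF P] by auto
qed

lemma (in prob_space) part_entropy_eq_entropy:
  assumes P: "fin_partition M P"
  shows "part_entropy M P = entropy (exp 1) (count_space (partition_cell P ` space M)) (partition_cell P)"
proof -
  interpret information_space M "exp 1" by unfold_locales simp
  have img: "partition_cell P ` space M \<subseteq> P" using partition_cell_in[OF P] by blast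
  have "(\<Sum>A\<in>partition_cell P ` space M. prob A * ln (prob A)) = (\<Sum>A\<in>P. prob A * ln (prob A))"
  proof (rule sum.mono_neutral_left)
    show "finite P" using P by (simp add: fin_partition_def)
    show "\<forall>A\<in>P - partition_cell P ` space M. prob A * ln (prob A) = 0"
    proof
      fix A assume "A \<in> P - partition_cell P ` space M"
      then have "A = {}" using partition_cell_vimage[OF P] by blast
      then show "prob A * ln (prob A) = 0" by simp
    qed
  qed (rule img)
  moreover have "(\<Sum>A\<in>partition_cell P ` space M. prob (partition_cell P -` {A} \<inter> space M)
        * log (exp 1) (prob (partition_cell P -` {A} \<inter> space M)))
      = (\<Sum>A\<in>partition_cell P ` space M. prob A * ln (prob A))"
    using img partition_cell_vimage[OF P] by (intro sum.cong refl) (simp add: log_ln[symmetric] subset_iff)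
  ultimately show ?thesis
    unfolding part_entropy_def entropy_simple_function[OF simple_function_partition_cell[OF P]]
    by (simp only:)
qed

lemma (in prob_space) part_entropy_le_finer:
  assumes P: "fin_partition M P" and Q: "fin_partition M Q"
    and finer: "\<And>\<omega> \<omega>'. \<omega> \<in> space M \<Longrightarrow> \<omega>' \<in> space M \<Longrightarrow>
      partition_cell Q \<omega> = partition_cell Q \<omega>' \<Longrightarrow> partition_cell P \<omega> = partition_cell P \<omega>'"
  shows "part_entropy M P \<le> part_entropy M Q"
proof -
  interpret information_space M "exp 1" by unfold_locales simp
  show ?thesis
    unfolding part_entropy_eq_entropy[OF P] part_entropy_eq_entropy[OF Q]
    by (rule entropy_le_determined[OF simple_function_partition_cell[OF Q] finer])
qed

lemma fin_partition_level_sets: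
  assumes "finite A" "g ` space M \<subseteq> A" "\<And>v. {\<omega> \<in> space M. g \<omega> = v} \<in> sets M"
  shows "fin_partition M ((\<lambda>v. {\<omega> \<in> space M. g \<omega> = v}) ` A)"
  using assms unfolding fin_partition_def by auto

lemma partition_cell_level_sets_eq_iff:
  assumes P: "fin_partition M ((\<lambda>v. {\<omega> \<in> space M. g \<omega> = v}) ` A)" and "g ` space M \<subseteq> A"
    and "\<omega> \<in> space M" "\<omega>' \<in> space M"
  shows "partition_cell ((\<lambda>v. {\<omega> \<in> space M. g \<omega> = v}) ` A) \<omega>
      = partition_cell ((\<lambda>v. {\<omega> \<in> space M. g \<omega> = v}) ` A) \<omega>' \<longleftrightarrow> g \<omega> = g \<omega>'"
  unfolding partition_cell_eq_iff[OF P assms(3,4)]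
  using partition_cell_eq[OF P, of "{\<omega>'' \<in> space M. g \<omega>'' = g \<omega>}" \<omega>] assms(2-4) by auto

lemma itinerary_partition_cell_in_PiE:
  assumes T: "T \<in> measurable M M" and P: "fin_partition M P" and "\<omega> \<in> space M"
  shows "itinerary T (partition_cell P) n \<omega> \<in> (\<Pi>\<^sub>E k\<in>{..<n}. P)"
  unfolding itinerary_def
  using partition_cell_in[OF P] measurable_space[OF measurable_compose_n[OF T]] assms(3)
  by (subst restrict_PiE_iff) blast

lemma refine_cell_in_sets:
  assumes T: "T \<in> measurable M M" and a: "\<And>k. k < n \<Longrightarrow> a k \<in> sets M"
  shows "{\<omega> \<in> space M. \<forall>k<n. (T ^^ k) \<omega> \<in> a k} \<in> sets M"
proof -
  have le_n: "{\<omega> \<in> space M. \<forall>k<m. (T ^^ k) \<omega> \<in> a k} \<in> sets M" if "m \<le> n" for m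
    using that
  proof (induction m)
    case 0
    have "{\<omega> \<in> space M. \<forall>k<0. (T ^^ k) \<omega> \<in> a k} = space M" by simp
    then show ?case by (simp only: sets.top)
  next
    case (Suc m)
    have "{\<omega> \<in> space M. \<forall>k<Suc m. (T ^^ k) \<omega> \<in> a k}
        = {\<omega> \<in> space M. \<forall>k<m. (T ^^ k) \<omega> \<in> a k} \<inter> ((T ^^ m) -` a m \<inter> space M)"
      by (auto simp: less_Suc_eq)
    moreover have "{\<omega> \<in> space M. \<forall>k<m. (T ^^ k) \<omega> \<in> a k} \<in> sets M"
      by (rule Suc.IH[OF Suc_leD[OF Suc.prems]])
    moreover have "(T ^^ m) -` a m \<inter> space M \<in> sets M"
      by (rule measurable_sets[OF measurable_compose_n[OF T] a[OF Suc_le_lessD[OF Suc.prems]]])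
    ultimately show ?case by (simp only: sets.Int)
  qed
  show ?thesis by (rule le_n[OF order_refl])
qed

lemma
  assumes T: "T \<in> measurable M M" and P: "fin_partition M P" and \<omega>: "\<omega> \<in> space M"
  shows refine_cell_containing:
      "{\<omega>' \<in> space M. \<forall>k<n. (T ^^ k) \<omega>' \<in> partition_cell P ((T ^^ k) \<omega>)} \<in> refine M T P n"
    and in_refine_cell_containing:
      "\<omega> \<in> {\<omega>' \<in> space M. \<forall>k<n. (T ^^ k) \<omega>' \<in> partition_cell P ((T ^^ k) \<omega>)}"
proof -
  have "{\<omega>' \<in> space M. \<forall>k<n. (T ^^ k) \<omega>' \<in> partition_cell P ((T ^^ k) \<omega>)}
      = {\<omega>' \<in> space M. \<forall>k<n. (T ^^ k) \<omega>' \<in> itinerary T (partition_cell P) n \<omega> k}"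
    by (simp add: itinerary_def)
  then show "{\<omega>' \<in> space M. \<forall>k<n. (T ^^ k) \<omega>' \<in> partition_cell P ((T ^^ k) \<omega>)} \<in> refine M T P n"
    unfolding refine_def using itinerary_partition_cell_in_PiE[OF T P \<omega>] by blast
  show "\<omega> \<in> {\<omega>' \<in> space M. \<forall>k<n. (T ^^ k) \<omega>' \<in> partition_cell P ((T ^^ k) \<omega>)}"
    using in_partition_cell[OF P] measurable_space[OF measurable_compose_n[OF T]] \<omega> by simp
qed

lemma fin_partition_refine:
  assumes T: "T \<in> measurable M M" and P: "fin_partition M P"
  shows "fin_partition M (refine M T P n)"
  unfolding fin_partition_def
proof (intro conjI ballI impI)
  show "finite (refine M T P n)"
    using P unfolding refine_def fin_partition_def by (simp add: finite_PiE)
  show "refine M T P n \<subseteq> sets M"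
  proof
    fix A assume "A \<in> refine M T P n"
    then obtain a where A: "A = {\<omega> \<in> space M. \<forall>k<n. (T ^^ k) \<omega> \<in> a k}" and a: "a \<in> (\<Pi>\<^sub>E k\<in>{..<n}. P)"
      unfolding refine_def by (rule imageE)
    have "P \<subseteq> sets M" using P by (simp add: fin_partition_def)
    then have "a k \<in> sets M" if "k < n" for k
      using PiE_mem[OF a] that by blast
    then show "A \<in> sets M" unfolding A by (rule refine_cell_in_sets[OF T])
  qed
  show "\<Union> (refine M T P n) = space M"
  proof
    show "space M \<subseteq> \<Union> (refine M T P n)"
      using refine_cell_containing[OF T P] in_refine_cell_containing[OF T P] by blast
  qed (unfold refine_def, blast)
  fix A B assume "A \<in> refine M T P n" "B \<in> refine M T P n" "A \<noteq> B"
  obtain a where a: "A = {\<omega> \<in> space M. \<forall>k<n. (T ^^ k) \<omega> \<in> a k}" "a \<in> (\<Pi>\<^sub>E k\<in>{..<n}. P)"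
    using \<open>A \<in> refine M T P n\<close> unfolding refine_def by (rule imageE)
  obtain b where b: "B = {\<omega> \<in> space M. \<forall>k<n. (T ^^ k) \<omega> \<in> b k}" "b \<in> (\<Pi>\<^sub>E k\<in>{..<n}. P)"
    using \<open>B \<in> refine M T P n\<close> unfolding refine_def by (rule imageE)
  show "A \<inter> B = {}"
  proof (rule ccontr)
    assume "A \<inter> B \<noteq> {}"
    then obtain \<omega> where "\<omega> \<in> A" "\<omega> \<in> B" by blast
    have "a k = b k" if "k < n" for k
    proof -
      have "(T ^^ k) \<omega> \<in> a k" "(T ^^ k) \<omega> \<in> b k" "a k \<in> P" "b k \<in> P"
        using \<open>\<omega> \<in> A\<close> \<open>\<omega> \<in> B\<close> a b that by auto
      then show ?thesis using partition_cell_eq[OF P] by metis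
    qed
    then have "a = b" using a(2) b(2) by (intro PiE_ext) auto
    then show False using a(1) b(1) \<open>A \<noteq> B\<close> by simp
  qed
qed

lemma partition_cell_refine:
  assumes T: "T \<in> measurable M M" and P: "fin_partition M P" and "\<omega> \<in> space M"
  shows "partition_cell (refine M T P n) \<omega>
    = {\<omega>' \<in> space M. \<forall>k<n. (T ^^ k) \<omega>' \<in> partition_cell P ((T ^^ k) \<omega>)}"
  by (rule partition_cell_eq[OF fin_partition_refine[OF T P]
      refine_cell_containing[OF T P assms(3)] in_refine_cell_containing[OF T P assms(3)]])

lemma partition_cell_refine_eq_iff:
  assumes T: "T \<in> measurable M M" and P: "fin_partition M P" and "\<omega> \<in> space M" "\<omega>' \<in> space M"
  shows "partition_cell (refine M T P n) \<omega> = partition_cell (refine M T P n) \<omega>'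
    \<longleftrightarrow> itinerary T (partition_cell P) n \<omega> = itinerary T (partition_cell P) n \<omega>'"
proof -
  have cell_iff: "(T ^^ k) \<omega>' \<in> partition_cell P ((T ^^ k) \<omega>) \<longleftrightarrow>
      partition_cell P ((T ^^ k) \<omega>) = partition_cell P ((T ^^ k) \<omega>')" for k
    using partition_cell_eq_iff[OF P] measurable_space[OF measurable_compose_n[OF T]] assms(3,4)
    by simp
  have "partition_cell (refine M T P n) \<omega> = partition_cell (refine M T P n) \<omega>'
      \<longleftrightarrow> \<omega>' \<in> partition_cell (refine M T P n) \<omega>"
    by (rule partition_cell_eq_iff[OF fin_partition_refine[OF T P] assms(3,4)])
  also have "\<dots> \<longleftrightarrow> (\<forall>k<n. (T ^^ k) \<omega>' \<in> partition_cell P ((T ^^ k) \<omega>))"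
    unfolding partition_cell_refine[OF T P assms(3)] using assms(4) by simp
  also have "\<dots> \<longleftrightarrow> itinerary T (partition_cell P) n \<omega> = itinerary T (partition_cell P) n \<omega>'"
    unfolding cell_iff itinerary_eq_iff ..
  finally show ?thesis .
qed

lemma (in mp_system) entropy_partition_cell_refine:
  assumes P: "fin_partition M P"
  shows "\<H>(partition_cell (refine M T P n)) = \<H>(itinerary T (partition_cell P) n)"
  by (rule entropy_eq_determined[OF simple_function_itinerary[OF simple_function_partition_cell[OF P]]])
     (simp add: partition_cell_refine_eq_iff[OF T_measurable P])

lemma mp_system_if_mpds: "mpds M T \<Longrightarrow> mp_system M (exp 1) T"
  unfolding mpds_def mp_system_def mp_system_axioms_def information_space_def
    information_space_axioms_def by simp

lemma ent_rel_le_part_entropy_refine: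
  assumes "mpds M T" and P: "fin_partition M P"
  shows "ent_rel M T P \<le> part_entropy M (refine M T P 2) - part_entropy M P"
proof -
  interpret mp_system M "exp 1" T using mp_system_if_mpds[OF assms(1)] .
  have c: "simple_function M (partition_cell P)" by (rule simple_function_partition_cell[OF P])
  show ?thesis
    unfolding ent_rel_def part_entropy_eq_entropy[OF fin_partition_refine[OF T_measurable P]]
      part_entropy_eq_entropy[OF P] entropy_partition_cell_refine[OF P] entropy_itinerary_1[OF c, symmetric]
    using lim_entropy_itinerary_increment_le[OF c, of 1] by (simp only: numeral_2_eq_2 One_nat_def)
qed

section \<open>Ordinal partitions\<close>

definition pattern_vector :: "('a \<Rightarrow> 'a) \<Rightarrow> (nat \<Rightarrow> 'a \<Rightarrow> real) \<Rightarrow> nat \<Rightarrow> nat \<Rightarrow> 'a \<Rightarrow> nat \<Rightarrow> nat list" where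
  "pattern_vector T X N d \<omega> = (\<lambda>i\<in>{..<N}. ord_pattern d (\<lambda>j. X i ((T ^^ (d - j)) \<omega>)))"

lemma pattern_vector_in_PiE: "pattern_vector T X N d \<omega> \<in> (\<Pi>\<^sub>E i\<in>{..<N}. perms d)"
  unfolding pattern_vector_def by (simp add: ord_pattern_in_perms)

lemma pattern_vector_eq_iff:
  assumes "ps \<in> (\<Pi>\<^sub>E i\<in>{..<N}. perms d)"
  shows "pattern_vector T X N d \<omega> = ps \<longleftrightarrow> (\<forall>i<N. has_pattern (\<lambda>j. X i ((T ^^ (d - j)) \<omega>)) d (ps i))"
proof -
  have "pattern_vector T X N d \<omega> = ps \<longleftrightarrow> (\<forall>i<N. ord_pattern d (\<lambda>j. X i ((T ^^ (d - j)) \<omega>)) = ps i)"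
    using assms unfolding pattern_vector_def by (auto simp: fun_eq_iff PiE_iff extensional_def)
  then show ?thesis by (simp add: ord_pattern_eq_has_pattern)
qed

lemma ord_part_eq_level_sets:
  "ord_part M T X N d
    = (\<lambda>ps. {\<omega> \<in> space M. pattern_vector T X N d \<omega> = ps}) ` (\<Pi>\<^sub>E i\<in>{..<N}. perms d)"
  unfolding ord_part_def by (intro image_cong refl) (simp add: pattern_vector_eq_iff)

lemma pattern_vector_level_set_in_sets:
  assumes T: "T \<in> measurable M M" and X: "\<forall>i<N. X i \<in> borel_measurable M"
  shows "{\<omega> \<in> space M. pattern_vector T X N d \<omega> = ps} \<in> sets M"
proof (cases "ps \<in> (\<Pi>\<^sub>E i\<in>{..<N}. perms d)")
  case True
  have pred: "Measurable.pred M (\<lambda>\<omega>. \<forall>i\<in>{..<N}. \<forall>l\<in>{1..d}.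
      ord_prec (\<lambda>j. X i ((T ^^ (d - j)) \<omega>)) (ps i ! (l - 1)) (ps i ! l))"
  proof (intro pred_intros_finite(3) finite_lessThan finite_atLeastAtMost)
    fix i l assume "i \<in> {..<N}"
    then have [measurable]: "X i \<in> borel_measurable M" using X by simp
    note measurable_compose_n[OF T, measurable]
    show "Measurable.pred M (\<lambda>\<omega>. ord_prec (\<lambda>j. X i ((T ^^ (d - j)) \<omega>)) (ps i ! (l - 1)) (ps i ! l))"
      unfolding ord_prec_def by measurable
  qed
  have eq: "{\<omega> \<in> space M. pattern_vector T X N d \<omega> = ps} = {\<omega> \<in> space M. \<forall>i\<in>{..<N}. \<forall>l\<in>{1..d}.
      ord_prec (\<lambda>j. X i ((T ^^ (d - j)) \<omega>)) (ps i ! (l - 1)) (ps i ! l)}"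
    using True unfolding pattern_vector_eq_iff[OF True] has_pattern_iff_ord_prec by auto
  show ?thesis unfolding eq using pred unfolding pred_def .
next
  case False
  have "pattern_vector T X N d \<omega> \<noteq> ps" for \<omega>
    using pattern_vector_in_PiE[of T X N d \<omega>] False by metis
  then have "{\<omega> \<in> space M. pattern_vector T X N d \<omega> = ps} = {}" by simp
  then show ?thesis by (simp only: sets.empty_sets)
qed

lemma fin_partition_ord_part:
  assumes T: "T \<in> measurable M M" and X: "\<forall>i<N. X i \<in> borel_measurable M"
  shows "fin_partition M (ord_part M T X N d)"
  unfolding ord_part_eq_level_sets
proof (rule fin_partition_level_sets[OF _ _ pattern_vector_level_set_in_sets[OF T X]])
  show "finite (\<Pi>\<^sub>E i\<in>{..<N}. perms d)" by (simp add: finite_PiE finite_perms)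
  show "pattern_vector T X N d ` space M \<subseteq> (\<Pi>\<^sub>E i\<in>{..<N}. perms d)"
    by (rule image_subsetI) (rule pattern_vector_in_PiE)
qed

lemma partition_cell_ord_part_eq_iff:
  assumes T: "T \<in> measurable M M" and X: "\<forall>i<N. X i \<in> borel_measurable M"
    and "\<omega> \<in> space M" "\<omega>' \<in> space M"
  shows "partition_cell (ord_part M T X N d) \<omega> = partition_cell (ord_part M T X N d) \<omega>'
    \<longleftrightarrow> pattern_vector T X N d \<omega> = pattern_vector T X N d \<omega>'"
  using partition_cell_level_sets_eq_iff[OF fin_partition_ord_part[OF T X, unfolded ord_part_eq_level_sets]
      image_subsetI[OF pattern_vector_in_PiE] assms(3,4)]
  unfolding ord_part_eq_level_sets .

lemma pattern_vector_Suc_eqD: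
  assumes eq: "pattern_vector T X N (Suc d) \<omega> = pattern_vector T X N (Suc d) \<omega>'"
  shows "pattern_vector T X N d \<omega> = pattern_vector T X N d \<omega>'"
    and "pattern_vector T X N d (T \<omega>) = pattern_vector T X N d (T \<omega>')"
proof -
  let ?x = "\<lambda>i \<omega> j. X i ((T ^^ (Suc d - j)) \<omega>)"
  have Suc_eq: "ord_pattern (Suc d) (?x i \<omega>) = ord_pattern (Suc d) (?x i \<omega>')" if "i < N" for i
    using fun_cong[OF eq, of i] that unfolding pattern_vector_def by simp
  have "ord_pattern d (\<lambda>j. X i ((T ^^ (d - j)) \<omega>)) = ord_pattern d (\<lambda>j. X i ((T ^^ (d - j)) \<omega>'))"
    if "i < N" for i
    using ord_pattern_Suc_eqD(2)[OF Suc_eq[OF that]] by simp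
  then show "pattern_vector T X N d \<omega> = pattern_vector T X N d \<omega>'"
    unfolding pattern_vector_def by (intro restrict_ext) simp
  have shift: "ord_pattern d (\<lambda>j. X i ((T ^^ (d - j)) (T \<omega>))) = ord_pattern d (?x i \<omega>)" for i \<omega>
    by (rule ord_pattern_cong) (simp add: Suc_diff_le funpow_swap1)
  have "ord_pattern d (\<lambda>j. X i ((T ^^ (d - j)) (T \<omega>))) = ord_pattern d (\<lambda>j. X i ((T ^^ (d - j)) (T \<omega>')))"
    if "i < N" for i
    unfolding shift using ord_pattern_Suc_eqD(1)[OF Suc_eq[OF that]] .
  then show "pattern_vector T X N d (T \<omega>) = pattern_vector T X N d (T \<omega>')"
    unfolding pattern_vector_def by (intro restrict_ext) simp
qed

lemma cond_entropy_le_sort_entropy: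
  assumes "mpds M T" and X: "\<forall>i<N. X i \<in> borel_measurable M"
  shows "cond_entropy M T X N d \<le> sort_entropy M T X N d"
proof -
  interpret prob_space M using assms(1) by (simp add: mpds_def)
  have T: "T \<in> measurable M M" using assms(1) by (simp add: mpds_def)
  note P = fin_partition_ord_part[OF T X]
  have "part_entropy M (refine M T (ord_part M T X N d) 2) \<le> part_entropy M (ord_part M T X N (Suc d))"
  proof (rule part_entropy_le_finer[OF fin_partition_refine[OF T P] P])
    fix \<omega> \<omega>' assume \<omega>: "\<omega> \<in> space M" "\<omega>' \<in> space M"
      and "partition_cell (ord_part M T X N (Suc d)) \<omega> = partition_cell (ord_part M T X N (Suc d)) \<omega>'"
    then have "pattern_vector T X N (Suc d) \<omega> = pattern_vector T X N (Suc d) \<omega>'"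
      using partition_cell_ord_part_eq_iff[OF T X] by blast
    moreover have "T \<omega> \<in> space M" "T \<omega>' \<in> space M" using \<omega> measurable_space[OF T] by auto
    ultimately have "\<forall>k<2. partition_cell (ord_part M T X N d) ((T ^^ k) \<omega>)
        = partition_cell (ord_part M T X N d) ((T ^^ k) \<omega>')"
      using pattern_vector_Suc_eqD partition_cell_ord_part_eq_iff[OF T X] \<omega>
      by (auto simp: less_2_cases_iff)
    then show "partition_cell (refine M T (ord_part M T X N d) 2) \<omega>
        = partition_cell (refine M T (ord_part M T X N d) 2) \<omega>'"
      unfolding partition_cell_refine_eq_iff[OF T P \<omega>] itinerary_eq_iff .
  qed
  then show ?thesis unfolding cond_entropy_def sort_entropy_def by simp
qed

section \<open>Increments and averages of a real sequence\<close>

lemma increment_le_average: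
  fixes H :: "nat \<Rightarrow> real"
  assumes "1 \<le> d" "H (Suc d) / real (Suc d) \<le> H d / real d"
  shows "H (Suc d) - H d \<le> H d / real d"
proof -
  have d: "0 < real d" using assms(1) by simp
  have "H (Suc d) * real d \<le> H d * (real d + 1)"
    using assms(2) d by (simp add: field_simps)
  then show ?thesis using d by (simp add: field_simps)
qed

lemma lim_increment_le_Liminf_average:
  fixes H :: "nat \<Rightarrow> real"
  assumes L: "(\<lambda>d. ereal (H (Suc d) - H d)) \<longlonglongrightarrow> L"
  shows "L \<le> liminf (\<lambda>d. ereal (H d / real d))"
proof (rule ccontr)
  assume "\<not> L \<le> liminf (\<lambda>d. ereal (H d / real d))"
  then have "liminf (\<lambda>d. ereal (H d / real d)) < L" by (simp only: not_le)
  then obtain c where c: "liminf (\<lambda>d. ereal (H d / real d)) < ereal c" "ereal c < L"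
    using ereal_dense2 by blast
  obtain D where D: "\<And>d. D \<le> d \<Longrightarrow> c < H (Suc d) - H d"
    using order_tendstoD(1)[OF L c(2)] unfolding eventually_sequentially by auto
  have linear: "H D + real (d - D) * c \<le> H d" if "D \<le> d" for d
    using that
  proof (induction d rule: dec_induct)
    case (step n)
    then show ?case using D[of n] by (simp add: of_nat_diff algebra_simps)
  qed simp
  define K where "K = H D - real D * c"
  have "eventually (\<lambda>d. ereal (c + K / real d) \<le> ereal (H d / real d)) sequentially"
    unfolding eventually_sequentially
  proof (intro exI allI impI)
    fix d assume "Suc D \<le> d"
    then have d: "0 < real d" and "c * real d + K \<le> H d"
      using linear[of d] unfolding K_def by (simp_all add: of_nat_diff algebra_simps)
    then have "(c * real d + K) / real d \<le> H d / real d" by (simp add: divide_right_mono)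
    also have "(c * real d + K) / real d = c + K / real d" using d by (simp add: field_simps)
    finally show "ereal (c + K / real d) \<le> ereal (H d / real d)" by simp
  qed
  then have "liminf (\<lambda>d. ereal (c + K / real d)) \<le> liminf (\<lambda>d. ereal (H d / real d))"
    by (rule Liminf_mono)
  moreover have "(\<lambda>d. c + K / real d) \<longlonglongrightarrow> c + 0"
    by (intro tendsto_add tendsto_const lim_const_over_n)
  then have "liminf (\<lambda>d. ereal (c + K / real d)) = ereal c"
    by (intro lim_imp_Liminf) (simp_all add: tendsto_ereal)
  ultimately show False using c(1) by simp
qed

lemma increments_le_averages_limits:
  fixes H :: "nat \<Rightarrow> real"
  assumes "(\<exists>d0\<ge>1. \<forall>d\<ge>d0. H (Suc d) / real (Suc d) \<le> H d / real d)
      \<or> (\<exists>L. (\<lambda>d. ereal (H (Suc d) - H d)) \<longlonglongrightarrow> L)"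
  shows "limsup (\<lambda>d. ereal (H (Suc d) - H d)) \<le> limsup (\<lambda>d. ereal (H d / real d))
    \<and> liminf (\<lambda>d. ereal (H (Suc d) - H d)) \<le> liminf (\<lambda>d. ereal (H d / real d))"
  using assms
proof
  assume "\<exists>d0\<ge>1. \<forall>d\<ge>d0. H (Suc d) / real (Suc d) \<le> H d / real d"
  then obtain d0 where d0: "1 \<le> d0" "\<forall>d\<ge>d0. H (Suc d) / real (Suc d) \<le> H d / real d" by blast
  have "eventually (\<lambda>d. ereal (H (Suc d) - H d) \<le> ereal (H d / real d)) sequentially"
    unfolding eventually_sequentially
  proof (intro exI allI impI)
    fix d assume "d0 \<le> d"
    then show "ereal (H (Suc d) - H d) \<le> ereal (H d / real d)"
      using increment_le_average[of d H] d0 by simp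
  qed
  then show ?thesis using Limsup_mono Liminf_mono by (intro conjI)
next
  assume "\<exists>L. (\<lambda>d. ereal (H (Suc d) - H d)) \<longlonglongrightarrow> L"
  then obtain L where L: "(\<lambda>d. ereal (H (Suc d) - H d)) \<longlonglongrightarrow> L" by blast
  have "L \<le> liminf (\<lambda>d. ereal (H d / real d))" by (rule lim_increment_le_Liminf_average[OF L])
  moreover have "liminf (\<lambda>d. ereal (H d / real d)) \<le> limsup (\<lambda>d. ereal (H d / real d))"
    by (rule Liminf_le_Limsup) simp
  ultimately show ?thesis
    using lim_imp_Limsup[OF _ L] lim_imp_Liminf[OF _ L] by simp
qed

theorem theorem1:
  fixes M :: "'a::topological_space measure" and T :: "'a \<Rightarrow> 'a"
    and X :: "nat \<Rightarrow> 'a \<Rightarrow> real" and N :: nat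
  assumes "mpds M T"
    and "N \<ge> 1"
    and "\<forall>i<N. X i \<in> borel_measurable M"
    and OR: "(\<lambda>d. ereal (ent_rel M T (ord_part M T X N d))) \<longlonglongrightarrow> ks_entropy M T"
  shows "(ks_entropy M T \<le> limsup (\<lambda>d. ereal (cond_entropy M T X N d)) \<and>
          limsup (\<lambda>d. ereal (cond_entropy M T X N d)) \<le> limsup (\<lambda>d. ereal (sort_entropy M T X N d)) \<and>
          ks_entropy M T \<le> liminf (\<lambda>d. ereal (cond_entropy M T X N d)) \<and>
          liminf (\<lambda>d. ereal (cond_entropy M T X N d)) \<le> liminf (\<lambda>d. ereal (sort_entropy M T X N d)))
       \<and> (((\<exists>d0\<ge>1. \<forall>d\<ge>d0. perm_entropy M T X N d \<ge> perm_entropy M T X N (Suc d)) \<or>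
            (\<exists>L. (\<lambda>d. ereal (sort_entropy M T X N d)) \<longlonglongrightarrow> L))
          \<longrightarrow> limsup (\<lambda>d. ereal (sort_entropy M T X N d)) \<le> limsup (\<lambda>d. ereal (perm_entropy M T X N d)) \<and>
              liminf (\<lambda>d. ereal (sort_entropy M T X N d)) \<le> liminf (\<lambda>d. ereal (perm_entropy M T X N d)))"
proof -
  let ?E = "\<lambda>d. ereal (ent_rel M T (ord_part M T X N d))"
  let ?C = "\<lambda>d. ereal (cond_entropy M T X N d)"
  let ?S = "\<lambda>d. ereal (sort_entropy M T X N d)"
  have T: "T \<in> measurable M M" using assms(1) by (simp add: mpds_def)
  have "ent_rel M T (ord_part M T X N d) \<le> cond_entropy M T X N d" for d
    using ent_rel_le_part_entropy_refine[OF assms(1) fin_partition_ord_part[OF T assms(3)]]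
    unfolding cond_entropy_def .
  then have "liminf ?E \<le> liminf ?C" by (intro Liminf_mono) simp
  then have "ks_entropy M T \<le> liminf ?C" using lim_imp_Liminf[OF _ OR] by simp
  moreover have "liminf ?C \<le> limsup ?C" by (rule Liminf_le_Limsup) simp
  moreover have "eventually (\<lambda>d. ?C d \<le> ?S d) sequentially"
    using cond_entropy_le_sort_entropy[OF assms(1,3)] by simp
  then have "limsup ?C \<le> limsup ?S" "liminf ?C \<le> liminf ?S"
    by (rule Limsup_mono, rule Liminf_mono)
  ultimately have part_i: "ks_entropy M T \<le> limsup ?C \<and> limsup ?C \<le> limsup ?S
      \<and> ks_entropy M T \<le> liminf ?C \<and> liminf ?C \<le> liminf ?S"
    by (meson order_trans)
  show ?thesis
    using part_i increments_le_averages_limits[of "\<lambda>d. part_entropy M (ord_part M T X N d)"]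
    unfolding perm_entropy_def sort_entropy_def by simp
qed

end
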